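(* Every almost reciprocal Puiseux monoid has unique atomic decomposition.
   Context: A Puiseux monoid is an additive submonoid of $(\mathbb{Q}_{\ge 0},+)$. For a positive rational $r = n/d$ in lowest terms, $\mathsf{d}(r) := d$. An almost reciprocal Puiseux monoid is a monoid of the form $\langle \frac{c_n}{d_n} \mid n \in \mathbb{N} \rangle$, where $(d_n)_{n\ge 1}$ is a strictly increasing sequence of positive integers whose terms are pairwise relatively prime, and $(c_n)_{n \ge 1}$ is a sequence of positive integers with $\gcd(c_n,d_n)=1$ for every $n$. An atom of $M$ is a nonzero element $a$ such that $a=x+y$ with $x,y\in M$ forces $x=0$ or $y=0$; $M$ is atomic if each element is a finite sum of atoms (almost reciprocal Puiseux monoids are atomic). Let $M$ be an atomic Puiseux monoid with set of atoms $\mathcal{A}(M) = \{a_n \mid n \in \mathbb{N}\}$. For $x \in M$, an atomic decomposition of $x$ is an expression $x = N + \sum_{i \in \mathbb{N}} c_i a_i$ (equality in $\mathbb{Q}$) with $N \in \mathbb{N}_0$ and $c_i \in \{0,1,\dots,\mathsf{d}(a_i)-1\}$ for every $i$, only finitely many $c_i$ nonzero. $M$ has unique atomic decomposition if every element of $M$ has exactly one atomic decomposition. *)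

theory Defs
  imports Complex_Main "HOL-Computational_Algebra.Primes"
begin

definition den :: "rat \<Rightarrow> nat" where
  "den r = nat (snd (quotient_of r))"

definition puiseux_monoid :: "rat set \<Rightarrow> bool" where
  "puiseux_monoid M \<longleftrightarrow> 0 \<in> M \<and> (\<forall>x\<in>M. 0 \<le> x) \<and> (\<forall>x\<in>M. \<forall>y\<in>M. x + y \<in> M)"

inductive_set gen_monoid :: "rat set \<Rightarrow> rat set" for S :: "rat set" where
  zero: "0 \<in> gen_monoid S"
| step: "x \<in> gen_monoid S \<Longrightarrow> s \<in> S \<Longrightarrow> x + s \<in> gen_monoid S"

definition is_atom :: "rat set \<Rightarrow> rat \<Rightarrow> bool" where
  "is_atom M a \<longleftrightarrow> a \<in> M \<and> a \<noteq> 0 \<and>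
     (\<forall>x\<in>M. \<forall>y\<in>M. a = x + y \<longrightarrow> x = 0 \<or> y = 0)"

text \<open>Almost reciprocal Puiseux monoid (indices start at 0 instead of 1).\<close>
definition almost_reciprocal :: "rat set \<Rightarrow> bool" where
  "almost_reciprocal M \<longleftrightarrow>
     (\<exists>c d :: nat \<Rightarrow> nat.
        strict_mono d \<and> (\<forall>n. 0 < d n) \<and>
        (\<forall>m n. m \<noteq> n \<longrightarrow> coprime (d m) (d n)) \<and>
        (\<forall>n. 0 < c n \<and> coprime (c n) (d n)) \<and>
        M = gen_monoid (range (\<lambda>n. of_nat (c n) / of_nat (d n))))"

definition atomic_decomposition :: "rat set \<Rightarrow> rat \<Rightarrow> nat \<Rightarrow> (rat \<Rightarrow> nat) \<Rightarrow> bool" where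
  "atomic_decomposition M x N c \<longleftrightarrow>
     finite {a. c a \<noteq> 0} \<and>
     (\<forall>a. c a \<noteq> 0 \<longrightarrow> is_atom M a) \<and>
     (\<forall>a. is_atom M a \<longrightarrow> c a < den a) \<and>
     x = of_nat N + (\<Sum>a\<in>{a. c a \<noteq> 0}. of_nat (c a) * a)"

definition unique_atomic_decomposition :: "rat set \<Rightarrow> bool" where
  "unique_atomic_decomposition M \<longleftrightarrow>
     (\<forall>x\<in>M. \<exists>!p. atomic_decomposition M x (fst p) (snd p))"

end

theory Submission
  imports Defs
begin

(* The atoms of an
   almost reciprocal Puiseux monoid are its generators c_n/d_n with d_n > 1, so distinct atoms
   have coprime denominators. Uniqueness: if two decompositions give an atom a the coefficients
   c and c', then (c - c') * a is an integer plus an integral combination of the other atoms,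
   hence denom_coprime (den a); as the numerator of a is prime to den a, den a divides c - c',
   and c = c' because both lie in [0, den a). Existence: adding an atom a to a decomposition
   raises its coefficient or, when that would reach den a, carries the natural number den a * a
   into the integer part. *)

definition denom_coprime :: "nat \<Rightarrow> rat \<Rightarrow> bool" where
  "denom_coprime q x \<longleftrightarrow> (\<exists>k::nat. 0 < k \<and> coprime k q \<and> of_nat k * x \<in> \<int>)"

lemma denom_coprime_Ints: "x \<in> \<int> \<Longrightarrow> denom_coprime q x"
  unfolding denom_coprime_def by (rule exI[of _ 1]) simp

lemma denom_coprime_add:
  assumes "denom_coprime q x" "denom_coprime q y"
  shows "denom_coprime q (x + y)"
proof -
  obtain k where k: "0 < k" "coprime k q" "of_nat k * x \<in> \<int>"
    using assms(1) denom_coprime_def by blast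
  obtain l where l: "0 < l" "coprime l q" "of_nat l * y \<in> \<int>"
    using assms(2) denom_coprime_def by blast
  have "of_nat (k * l) * (x + y) = of_nat l * (of_nat k * x) + of_nat k * (of_nat l * y)"
    by (simp add: algebra_simps)
  also have "\<dots> \<in> \<int>"
    using k l by (meson Ints_add Ints_mult Ints_of_nat)
  finally show ?thesis
    unfolding denom_coprime_def using k l by (intro exI[of _ "k * l"]) simp
qed

lemma denom_coprime_of_int_mult:
  assumes "denom_coprime q x"
  shows "denom_coprime q (of_int e * x)"
proof -
  obtain k where k: "0 < k" "coprime k q" "of_nat k * x \<in> \<int>"
    using assms denom_coprime_def by blast
  have "of_nat k * (of_int e * x) = of_int e * (of_nat k * x)"
    by simp
  also have "\<dots> \<in> \<int>"
    using k by (meson Ints_mult Ints_of_int)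
  finally show ?thesis
    unfolding denom_coprime_def using k by blast
qed

lemma denom_coprime_sum:
  "finite A \<Longrightarrow> (\<And>a. a \<in> A \<Longrightarrow> denom_coprime q (f a)) \<Longrightarrow>
    denom_coprime q (sum f A)"
  by (induction A rule: finite_induct) (auto intro: denom_coprime_Ints denom_coprime_add)

lemma den_pos: "0 < den a"
  unfolding den_def using quotient_of_denom_pos' by simp

lemma den_mult_Ints: "of_nat (den a) * a \<in> \<int>"
proof -
  obtain p q where pq: "quotient_of a = (p, q)"
    by fastforce
  then show ?thesis
    using quotient_of_div[OF pq] quotient_of_denom_pos[OF pq] by (simp add: den_def)
qed

lemma den_mult_eq_of_nat:
  assumes "0 \<le> a"
  obtains n :: nat where "of_nat (den a) * a = of_nat n"
proof -
  obtain t where t: "of_nat (den a) * a = of_int t"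
    using den_mult_Ints by (auto elim: Ints_cases)
  moreover have "0 \<le> t"
    using assms t by (metis of_int_0_le_iff of_nat_0_le_iff zero_le_mult_iff)
  ultimately show thesis
    using that[of "nat t"] by simp
qed

lemma denom_coprime_if_coprime_den: "coprime (den a) q \<Longrightarrow> denom_coprime q a"
  unfolding denom_coprime_def using den_pos den_mult_Ints by blast

lemma den_dvd_if_denom_coprime_mult:
  assumes "denom_coprime (den a) (of_int e * a)"
  shows "int (den a) dvd e"
proof -
  obtain p q where pq: "quotient_of a = (p, q)"
    by fastforce
  have q: "int (den a) = q" "0 < q"
    using pq quotient_of_denom_pos[OF pq] by (auto simp: den_def)
  obtain k where k: "0 < k" "coprime k (den a)" "of_nat k * (of_int e * a) \<in> \<int>"
    using assms denom_coprime_def by blast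
  then obtain t where "of_nat k * (of_int e * a) = (of_int t :: rat)"
    by (auto elim: Ints_cases)
  then have "of_int (int k * e * p) = (of_int (t * q) :: rat)"
    using quotient_of_div[OF pq] q by (simp add: field_simps)
  then have "q dvd int k * (e * p)"
    unfolding of_int_eq_iff by (metis dvd_triv_right mult.assoc)
  moreover have "coprime q (int k)" "coprime q p"
    using k(2) q(1) quotient_of_coprime[OF pq]
    by (metis coprime_commute coprime_int_iff, metis coprime_commute)
  ultimately have "q dvd e"
    by (simp add: coprime_dvd_mult_right_iff coprime_dvd_mult_left_iff)
  then show ?thesis
    using q(1) by simp
qed

lemma sum_support_eq_sum_superset:
  fixes c :: "rat \<Rightarrow> nat"
  assumes "finite T" "{a. c a \<noteq> 0} \<subseteq> T"
  shows "(\<Sum>a\<in>{a. c a \<noteq> 0}. of_nat (c a) * a) = (\<Sum>a\<in>T. of_nat (c a) * a)"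
  using assms by (intro sum.mono_neutral_left) auto

lemma sum_support_fun_upd:
  fixes c :: "rat \<Rightarrow> nat"
  assumes "finite {b. c b \<noteq> 0}"
  shows "(\<Sum>b\<in>{b. (c(a := v)) b \<noteq> 0}. of_nat ((c(a := v)) b) * b) + of_nat (c a) * a =
         (\<Sum>b\<in>{b. c b \<noteq> 0}. of_nat (c b) * b) + of_nat v * a"
proof -
  define T where "T = insert a {b. c b \<noteq> 0}"
  have T: "finite T" "a \<in> T"
    using assms unfolding T_def by auto
  have "(\<Sum>b\<in>{b. (c(a := v)) b \<noteq> 0}. of_nat ((c(a := v)) b) * b) =
        (\<Sum>b\<in>T. of_nat ((c(a := v)) b) * b)"
    using T(1) by (rule sum_support_eq_sum_superset) (auto simp: T_def)
  also have "\<dots> = of_nat v * a + (\<Sum>b\<in>T - {a}. of_nat ((c(a := v)) b) * b)"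
    using T by (simp add: sum.remove)
  also have "(\<Sum>b\<in>T - {a}. of_nat ((c(a := v)) b) * b) = (\<Sum>b\<in>T - {a}. of_nat (c b) * b)"
    by (rule sum.cong) auto
  moreover have "(\<Sum>b\<in>{b. c b \<noteq> 0}. of_nat (c b) * b) = (\<Sum>b\<in>T. of_nat (c b) * b)"
    using T(1) by (rule sum_support_eq_sum_superset) (auto simp: T_def)
  moreover have "\<dots> = of_nat (c a) * a + (\<Sum>b\<in>T - {a}. of_nat (c b) * b)"
    using T by (simp add: sum.remove)
  ultimately show ?thesis
    by simp
qed

lemma atomic_decomposition_add_atom:
  assumes dec: "atomic_decomposition M x N c" and a: "is_atom M a" "0 \<le> a"
  shows "\<exists>N' c'. atomic_decomposition M (x + a) N' c'"
proof -
  let ?S = "\<lambda>c. \<Sum>b\<in>{b. c b \<noteq> 0}. of_nat (c b) * b"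
  have fin: "finite {b. c b \<noteq> 0}" and x: "x = of_nat N + ?S c" and "c a < den a"
    using dec a(1) unfolding atomic_decomposition_def by auto
  then consider "c a + 1 < den a" | "c a + 1 = den a"
    by linarith
  then show ?thesis
  proof cases
    case 1
    let ?c' = "c(a := c a + 1)"
    have "x + a = of_nat N + ?S ?c'"
      using x sum_support_fun_upd[OF fin, of a "c a + 1"] by (simp add: algebra_simps)
    moreover have "finite {b. ?c' b \<noteq> 0}"
      using fin by (auto intro: finite_subset[of _ "insert a {b. c b \<noteq> 0}"])
    moreover have "\<forall>b. ?c' b \<noteq> 0 \<longrightarrow> is_atom M b"
      and "\<forall>b. is_atom M b \<longrightarrow> ?c' b < den b"
      using dec a(1) 1 unfolding atomic_decomposition_def by auto
    ultimately have "atomic_decomposition M (x + a) N ?c'"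
      unfolding atomic_decomposition_def by blast
    then show ?thesis
      by blast
  next
    case 2
    obtain n where n: "of_nat (den a) * a = of_nat n"
      using den_mult_eq_of_nat[OF a(2)] by blast
    let ?c' = "c(a := 0)"
    have "x + a = of_nat N + ?S ?c' + of_nat (c a + 1) * a"
      using x sum_support_fun_upd[OF fin, of a 0] by (simp add: algebra_simps)
    also have "\<dots> = of_nat (N + n) + ?S ?c'"
      using 2 n by simp
    finally have "x + a = of_nat (N + n) + ?S ?c'" .
    moreover have "finite {b. ?c' b \<noteq> 0}"
      using fin by (rule rev_finite_subset) auto
    ultimately have "atomic_decomposition M (x + a) (N + n) ?c'"
      using dec den_pos unfolding atomic_decomposition_def by auto
    then show ?thesis
      by blast
  qed
qed

lemma atomic_decomposition_coeff_eq:
  assumes coprime_atoms: "pairwise (\<lambda>a b. coprime (den a) (den b)) {a. is_atom M a}"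
    and dec: "atomic_decomposition M x N c" and dec': "atomic_decomposition M x N' c'"
    and a0: "is_atom M a0"
  shows "c a0 = c' a0"
proof -
  have fin: "finite {a. c a \<noteq> 0}" "finite {a. c' a \<noteq> 0}"
    and atoms: "\<And>a. c a \<noteq> 0 \<Longrightarrow> is_atom M a" "\<And>a. c' a \<noteq> 0 \<Longrightarrow> is_atom M a"
    and bounds: "c a0 < den a0" "c' a0 < den a0"
    and x: "x = of_nat N + (\<Sum>a\<in>{a. c a \<noteq> 0}. of_nat (c a) * a)"
           "x = of_nat N' + (\<Sum>a\<in>{a. c' a \<noteq> 0}. of_nat (c' a) * a)"
    using dec dec' a0 unfolding atomic_decomposition_def by auto
  define T where "T = insert a0 ({a. c a \<noteq> 0} \<union> {a. c' a \<noteq> 0})"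
  have T: "finite T" "a0 \<in> T"
    using fin unfolding T_def by auto
  have T_atoms: "is_atom M a" if "a \<in> T" for a
    using that a0 atoms unfolding T_def by auto
  define e where "e = int (c a0) - int (c' a0)"
  have "(\<Sum>a\<in>{a. c a \<noteq> 0}. of_nat (c a) * a) = (\<Sum>a\<in>T. of_nat (c a) * a)"
       "(\<Sum>a\<in>{a. c' a \<noteq> 0}. of_nat (c' a) * a) = (\<Sum>a\<in>T. of_nat (c' a) * a)"
    by (rule sum_support_eq_sum_superset[OF T(1)], force simp: T_def)+
  then have "(\<Sum>a\<in>T. of_int (int (c' a) - int (c a)) * a) = of_int (int N - int N')"
    using x by (simp add: sum_subtractf algebra_simps)
  then have "of_int e * a0 = of_int (int N' - int N) + (\<Sum>a\<in>T - {a0}. of_int (int (c' a) - int (c a)) * a)"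
    using T by (simp add: sum.remove e_def algebra_simps)
  also have "denom_coprime (den a0) \<dots>"
  proof (rule denom_coprime_add[OF denom_coprime_Ints denom_coprime_sum])
    fix a assume "a \<in> T - {a0}"
    then have "coprime (den a) (den a0)"
      using T_atoms a0 by (auto intro: pairwiseD[OF coprime_atoms])
    then show "denom_coprime (den a0) (of_int (int (c' a) - int (c a)) * a)"
      by (intro denom_coprime_of_int_mult denom_coprime_if_coprime_den)
  qed (use T in simp_all)
  finally have "int (den a0) dvd int (c a0) - int (c' a0)"
    unfolding e_def by (rule den_dvd_if_denom_coprime_mult)
  then have "int (c a0) mod int (den a0) = int (c' a0) mod int (den a0)"
    by (simp add: mod_eq_dvd_iff)
  then show ?thesis
    using bounds by (simp add: of_nat_mod[symmetric])
qed

lemma atomic_decomposition_unique: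
  assumes coprime_atoms: "pairwise (\<lambda>a b. coprime (den a) (den b)) {a. is_atom M a}"
    and dec: "atomic_decomposition M x N c" and dec': "atomic_decomposition M x N' c'"
  shows "N = N' \<and> c = c'"
proof -
  have "c a = c' a" for a
  proof (cases "is_atom M a")
    case True
    then show ?thesis
      using atomic_decomposition_coeff_eq[OF coprime_atoms dec dec'] by blast
  next
    case False
    then show ?thesis
      using dec dec' unfolding atomic_decomposition_def by metis
  qed
  then have "c = c'" ..
  then show ?thesis
    using dec dec' unfolding atomic_decomposition_def by simp
qed

lemma unique_atomic_decompositionI:
  assumes "\<And>x. x \<in> M \<Longrightarrow> \<exists>N c. atomic_decomposition M x N c"
    and "pairwise (\<lambda>a b. coprime (den a) (den b)) {a. is_atom M a}"
  shows "unique_atomic_decomposition M"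
  unfolding unique_atomic_decomposition_def
proof
  fix x assume "x \<in> M"
  then obtain N c where "atomic_decomposition M x N c"
    using assms(1) by blast
  then show "\<exists>!p. atomic_decomposition M x (fst p) (snd p)"
    using atomic_decomposition_unique[OF assms(2)] by (intro ex1I[of _ "(N, c)"]) (auto simp: prod_eq_iff)
qed

lemma gen_monoid_base: "s \<in> S \<Longrightarrow> s \<in> gen_monoid S"
  using gen_monoid.step[OF gen_monoid.zero] by fastforce

lemma is_atom_gen_monoid_mem:
  assumes "0 \<notin> S" "is_atom (gen_monoid S) a"
  shows "a \<in> S"
proof -
  have "a \<in> gen_monoid S" "a \<noteq> 0"
    using assms(2) unfolding is_atom_def by auto
  then show ?thesis
  proof cases
    case (step x s)
    then have "x = 0"
      using assms gen_monoid_base unfolding is_atom_def by metis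
    then show ?thesis
      using step by simp
  qed simp
qed

locale almost_reciprocal_generators =
  fixes c d :: "nat \<Rightarrow> nat"
  assumes d_pos: "\<And>n. 0 < d n"
    and d_coprime: "\<And>m n. m \<noteq> n \<Longrightarrow> coprime (d m) (d n)"
    and c_pos: "\<And>n. 0 < c n"
    and c_d_coprime: "\<And>n. coprime (c n) (d n)"
begin

definition gen :: "nat \<Rightarrow> rat" where
  "gen n = of_nat (c n) / of_nat (d n)"

lemma gen_pos: "0 < gen n"
  unfolding gen_def using d_pos[of n] c_pos[of n] by simp

lemma den_gen: "den (gen n) = d n"
proof -
  have "gen n = Fract (int (c n)) (int (d n))"
    unfolding gen_def by (simp add: Fract_of_int_quotient)
  then have "quotient_of (gen n) = (int (c n), int (d n))"
    using d_pos[of n] c_d_coprime[of n] by (simp add: quotient_of_Fract)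
  then show ?thesis
    unfolding den_def by simp
qed

lemma denom_coprime_gen: "m \<noteq> n \<Longrightarrow> denom_coprime (d m) (gen n)"
  using d_coprime by (metis coprime_commute den_gen denom_coprime_if_coprime_den)

lemma gen_monoid_split:
  "y \<in> gen_monoid (range gen) \<Longrightarrow>
    \<exists>k::nat. \<exists>w. y = of_nat k * gen m + w \<and> 0 \<le> w \<and> denom_coprime (d m) w"
proof (induction rule: gen_monoid.induct)
  case zero
  show ?case
    by (intro exI[of _ 0] exI[of _ 0]) (simp add: denom_coprime_Ints)
next
  case (step x s)
  obtain k w where x: "x = of_nat k * gen m + w" "0 \<le> w" "denom_coprime (d m) w"
    using step.IH by blast
  obtain n where s: "s = gen n"
    using step.hyps(2) by blast
  show ?case
  proof (cases "n = m")
    case True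
    then show ?thesis
      using x s by (intro exI[of _ "Suc k"] exI[of _ w]) (simp add: algebra_simps)
  next
    case False
    then show ?thesis
      using x s gen_pos[of n] denom_coprime_add[OF x(3) denom_coprime_gen[OF False[symmetric]]]
      by (intro exI[of _ k] exI[of _ "w + gen n"]) (simp add: algebra_simps)
  qed
qed

lemma is_atom_gen:
  assumes "1 < d m"
  shows "is_atom (gen_monoid (range gen)) (gen m)"
  unfolding is_atom_def
proof (intro conjI ballI impI)
  show "gen m \<in> gen_monoid (range gen)"
    by (simp add: gen_monoid_base)
  show "gen m \<noteq> 0"
    using gen_pos[of m] by simp
  fix y z assume y: "y \<in> gen_monoid (range gen)" and z: "z \<in> gen_monoid (range gen)"
    and sum: "gen m = y + z"
  obtain k1 w1 where 1: "y = of_nat k1 * gen m + w1" "0 \<le> w1" "denom_coprime (d m) w1"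
    using gen_monoid_split[OF y] by blast
  obtain k2 w2 where 2: "z = of_nat k2 * gen m + w2" "0 \<le> w2" "denom_coprime (d m) w2"
    using gen_monoid_split[OF z] by blast
  have total: "gen m = of_nat (k1 + k2) * gen m + (w1 + w2)"
    using sum 1 2 by (simp add: algebra_simps)
  then have "of_nat (k1 + k2) * gen m \<le> 1 * gen m"
    using 1(2) 2(2) by linarith
  then have "k1 + k2 \<le> 1"
    using gen_pos[of m] by (subst (asm) mult_le_cancel_right_pos) auto
  moreover have "k1 + k2 \<noteq> 0"
  proof
    assume "k1 + k2 = 0"
    then have "gen m = w1 + w2"
      using sum 1 2 by simp
    then have "denom_coprime (d m) (gen m)"
      using denom_coprime_add[OF 1(3) 2(3)] by simp
    then have "int (d m) dvd 1"
      using den_dvd_if_denom_coprime_mult[of "gen m" 1] by (simp add: den_gen)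
    then show False
      using assms by simp
  qed
  ultimately have "k1 + k2 = 1"
    by linarith
  then have "w1 + w2 = 0"
    using total by simp
  then have "w1 = 0" "w2 = 0"
    using 1(2) 2(2) by linarith+
  with \<open>k1 + k2 = 1\<close> show "y = 0 \<or> z = 0"
    using 1(1) 2(1) by (cases k1) auto
qed

lemma atomic_decomposition_exists:
  "x \<in> gen_monoid (range gen) \<Longrightarrow>
    \<exists>N cf. atomic_decomposition (gen_monoid (range gen)) x N cf"
proof (induction rule: gen_monoid.induct)
  case zero
  have "atomic_decomposition (gen_monoid (range gen)) 0 0 (\<lambda>_. 0)"
    unfolding atomic_decomposition_def using den_pos by simp
  then show ?case
    by blast
next
  case (step x s)
  obtain N cf where dec: "atomic_decomposition (gen_monoid (range gen)) x N cf"
    using step.IH by blast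
  obtain m where s: "s = gen m"
    using step.hyps(2) by blast
  show ?case
  proof (cases "d m = 1")
    case True
    then have "x + s = of_nat (N + c m) + (\<Sum>a\<in>{a. cf a \<noteq> 0}. of_nat (cf a) * a)"
      using dec s unfolding atomic_decomposition_def gen_def by simp
    then show ?thesis
      using dec unfolding atomic_decomposition_def by blast
  next
    case False
    then have "is_atom (gen_monoid (range gen)) s"
      using s d_pos[of m] is_atom_gen by simp
    then show ?thesis
      using atomic_decomposition_add_atom[OF dec] s gen_pos[of m] by simp
  qed
qed

lemma pairwise_coprime_den_atoms:
  "pairwise (\<lambda>a b. coprime (den a) (den b)) {a. is_atom (gen_monoid (range gen)) a}"
proof (rule pairwiseI)
  have "0 \<notin> range gen"
    using gen_pos by (metis less_irrefl rangeE)
  fix a b assume "a \<in> {a. is_atom (gen_monoid (range gen)) a}"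
    "b \<in> {a. is_atom (gen_monoid (range gen)) a}" and "a \<noteq> b"
  then have "a \<in> range gen" "b \<in> range gen"
    using \<open>0 \<notin> range gen\<close> by (auto intro: is_atom_gen_monoid_mem)
  then obtain m n where "a = gen m" "b = gen n" "m \<noteq> n"
    using \<open>a \<noteq> b\<close> by blast
  then show "coprime (den a) (den b)"
    using d_coprime by (simp add: den_gen)
qed

end

theorem proposition4p3:
  fixes M :: "rat set"
  assumes "almost_reciprocal M"
  shows "unique_atomic_decomposition M"
proof -
  obtain c d :: "nat \<Rightarrow> nat" where
    gens: "\<forall>n. 0 < d n" "\<forall>m n. m \<noteq> n \<longrightarrow> coprime (d m) (d n)"
      "\<forall>n. 0 < c n \<and> coprime (c n) (d n)"
      "M = gen_monoid (range (\<lambda>n. of_nat (c n) / of_nat (d n)))"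
    using assms unfolding almost_reciprocal_def by blast
  interpret almost_reciprocal_generators c d
    using gens by unfold_locales auto
  have "M = gen_monoid (range gen)"
    using gens(4) by (simp add: gen_def[abs_def])
  then show ?thesis
    using unique_atomic_decompositionI[OF atomic_decomposition_exists pairwise_coprime_den_atoms] by simp
qed

end
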